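(* The function $h$ is non-differentiable on $D(h)$: at no point $x_0\in D(h)$ does the difference quotient $\frac{h(x)-h(x_0)}{x-x_0}$, $x\in D(h)$, $x\to x_0$, have a finite limit.
   Context: Let $q>3$ be an integer, fix $u\in\{0,1,\ldots,q-1\}$, and put $\Theta=\{1,2,\ldots,q-1\}\setminus\{u\}$. The nega-$q$-ary representation is $\Delta^{-q}_{\beta_1\beta_2\ldots}=\sum_{k\ge1}\frac{\beta_k}{(-q)^k}$, $\beta_k\in\{0,\ldots,q-1\}$. For a sequence $(\alpha_n)_{n\ge1}$ with $\alpha_n\in\Theta$, let $x((\alpha_n))$ be the number whose nega-$q$-ary digit string is the concatenation of the blocks $\underbrace{u\ldots u}_{\alpha_n-1}\alpha_n$ ($\alpha_n-1$ copies of $u$ followed by the digit $\alpha_n$), $n=1,2,\ldots$; equivalently $x=-\frac{u}{q+1}+\sum_{n\ge1}\frac{\alpha_n-u}{(-q)^{\alpha_1+\cdots+\alpha_n}}$. Let $D(h)$ be the set of all such $x$, and define $h:D(h)\to\mathbb R$ by $h(x)=\Delta^{-q}_{\alpha_1\alpha_2\ldots}=\sum_{n\ge1}\frac{\alpha_n}{(-q)^n}$. *)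

theory Defs
  imports "HOL-Analysis.Analysis"
begin

definition Theta :: "nat \<Rightarrow> nat \<Rightarrow> nat set" where
  "Theta q u = {1..q-1} - {u}"

text \<open>Admissible sequences; alpha 0 plays the role of alpha_1, alpha n of alpha_(n+1).\<close>
definition adm_seqs :: "nat \<Rightarrow> nat \<Rightarrow> (nat \<Rightarrow> nat) set" where
  "adm_seqs q u = {a. \<forall>n. a n \<in> Theta q u}"

definition xval :: "nat \<Rightarrow> nat \<Rightarrow> (nat \<Rightarrow> nat) \<Rightarrow> real" where
  "xval q u a = - real u / (real q + 1)
     + (\<Sum>n. (real (a n) - real u) / (- real q) ^ (\<Sum>k\<le>n. a k))"

definition negaq :: "nat \<Rightarrow> (nat \<Rightarrow> nat) \<Rightarrow> real" where
  "negaq q a = (\<Sum>n. real (a n) / (- real q) ^ (Suc n))"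

definition Dh :: "nat \<Rightarrow> nat \<Rightarrow> real set" where
  "Dh q u = xval q u ` adm_seqs q u"

definition h :: "nat \<Rightarrow> nat \<Rightarrow> real \<Rightarrow> real" where
  "h q u x = negaq q (SOME a. a \<in> adm_seqs q u \<and> xval q u a = x)"

end

theory Submission
  imports Defs
begin

text \<open>Write S(m) = a(0) + ... + a(m-1). Two admissible sequences that agree on their first
  m digits have x-values within q^-S(m) of each other, while changing the m-th digit changes
  the h-value by an amount of order q^-m. Changing that single digit of a therefore produces
  difference quotients of size q^(S(m) - m - 1), so a finite derivative at x(a) forces S(m) - m
  to stay bounded, i.e. a ends in 1 1 1 .... For such a, replacing a late tail 1 1 1 ... by
  d 1 1 ... or by d d 1 ... gives difference quotients that do not depend on the position of
  the change but differ from each other, so they have no common limit. That h is well defined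
  rests on the injectivity of x, for which q > 3 keeps every x(a) off the endpoints of the
  interval of nega-q-ary values.\<close>

section \<open>Admissible sequences\<close>

definition drop_seq :: "nat \<Rightarrow> (nat \<Rightarrow> 'a) \<Rightarrow> nat \<Rightarrow> 'a" where
  "drop_seq m a = (\<lambda>n. a (n + m))"

lemma drop_seq_0 [simp]: "drop_seq 0 a = a"
  by (simp add: drop_seq_def)

lemma drop_seq_drop_seq [simp]: "drop_seq m (drop_seq n a) = drop_seq (m + n) a"
  by (simp add: drop_seq_def add.assoc)

lemma drop_seq_apply: "drop_seq m a n = a (n + m)"
  by (simp add: drop_seq_def)

lemma in_adm_seqs_iff: "a \<in> adm_seqs q u \<longleftrightarrow> (\<forall>n. 1 \<le> a n \<and> a n \<le> q - 1 \<and> a n \<noteq> u)"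
  by (auto simp: adm_seqs_def Theta_def)

lemma adm_seqs_drop_seq: "a \<in> adm_seqs q u \<Longrightarrow> drop_seq m a \<in> adm_seqs q u"
  by (simp add: in_adm_seqs_iff drop_seq_apply)

lemma adm_seqs_fun_upd:
  "a \<in> adm_seqs q u \<Longrightarrow> 1 \<le> d \<Longrightarrow> d \<le> q - 1 \<Longrightarrow> d \<noteq> u \<Longrightarrow> a(m := d) \<in> adm_seqs q u"
  by (simp add: in_adm_seqs_iff)

lemma adm_seqs_digit_sum_ge: "a \<in> adm_seqs q u \<Longrightarrow> m \<le> (\<Sum>k<m. a k)"
proof (induction m)
  case (Suc m)
  then have "1 \<le> a m" by (simp add: in_adm_seqs_iff)
  with Suc show ?case by simp
qed simp

lemma exists_other_digit:
  fixes q u e :: nat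
  assumes "q > 3"
  obtains d where "1 \<le> d" "d \<le> q - 1" "d \<noteq> u" "d \<noteq> e"
proof -
  have "\<exists>d\<in>{1, 2, 3 :: nat}. d \<noteq> u \<and> d \<noteq> e" by auto
  with assms that show thesis by force
qed

lemma eventually_digits_one:
  assumes "a \<in> adm_seqs q u" "\<And>m. (\<Sum>k<m. a k) \<le> m + M"
  obtains n0 where "\<And>m. n0 \<le> m \<Longrightarrow> a m = 1"
proof -
  define e where "e m = (\<Sum>k<m. a k) - m" for m
  have digit: "1 \<le> a m" for m using assms(1) by (simp add: in_adm_seqs_iff)
  have e_Suc: "e (Suc m) = e m + (a m - 1)" for m
    using adm_seqs_digit_sum_ge[OF assms(1), of m] digit[of m] by (simp add: e_def)
  have fin: "finite (range e)"
    by (rule finite_subset[of _ "{..M}"]) (use assms(2) in \<open>auto simp: e_def le_diff_conv add.commute\<close>)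
  obtain n0 where "e n0 = Max (range e)"
    using Max_in[OF fin] by auto
  with fin have n0: "e m \<le> e n0" for m
    by simp
  have "a m = 1" if "n0 \<le> m" for m
  proof -
    have "e n0 \<le> e m" by (rule lift_Suc_mono_le[of e, OF _ that]) (simp add: e_Suc)
    then show ?thesis using n0[of "Suc m"] e_Suc[of m] digit[of m] by simp
  qed
  then show thesis by (rule that)
qed

section \<open>Nega-\<open>q\<close>-ary digit maps\<close>

text \<open>\<open>nega_interval q\<close> is the set of all nega-q-ary values; prefixing a digit string by the
  digit d maps its value v to \<open>nega_step q d v\<close>, and prefixing it by the block u...u d
  (d - 1 copies of u) maps v to \<open>block_map q u d v\<close>.\<close>

definition nega_interval :: "nat \<Rightarrow> real set" where
  "nega_interval q = {- real q / (real q + 1) .. 1 / (real q + 1)}"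

definition nega_step :: "nat \<Rightarrow> real \<Rightarrow> real \<Rightarrow> real" where
  "nega_step q d v = (d + v) / - real q"

definition block_map :: "nat \<Rightarrow> nat \<Rightarrow> nat \<Rightarrow> real \<Rightarrow> real" where
  "block_map q u d v = (nega_step q (real u) ^^ (d - 1)) (nega_step q (real d) v)"

lemma nega_step_fixpoint:
  assumes "q > 0"
  shows "nega_step q (real u) (- real u / (real q + 1)) = - real u / (real q + 1)"
proof -
  have "real u + - real u / (real q + 1) = real u * real q / (real q + 1)"
    by (simp add: field_simps add_pos_nonneg)
  then show ?thesis
    using assms by (simp add: nega_step_def)
qed

lemma funpow_nega_step:
  assumes "q > 0"
  shows "(nega_step q (real u) ^^ k) w
    = - real u / (real q + 1) + (w + real u / (real q + 1)) / (- real q) ^ k"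
proof (induction k)
  case (Suc k)
  let ?p = "- real u / (real q + 1)"
  have "(nega_step q (real u) ^^ Suc k) w = nega_step q (real u) (?p + (w - ?p) / (- real q) ^ k)"
    using Suc by simp
  also have "\<dots> = nega_step q (real u) ?p + (w - ?p) / (- real q) ^ k / - real q"
    by (simp only: nega_step_def add_divide_distrib add.assoc)
  finally show ?case
    unfolding nega_step_fixpoint[OF assms] by (simp add: mult.commute)
qed simp

lemma funpow_nega_step_inj:
  "q > 0 \<Longrightarrow> (nega_step q (real u) ^^ k) v = (nega_step q (real u) ^^ k) w \<Longrightarrow> v = w"
  by (simp add: funpow_nega_step)

lemma block_map_eq:
  assumes "q > 0" "1 \<le> d"
  shows "block_map q u d v
    = - real u / (real q + 1) + (real d - real u + real u / (real q + 1) + v) / (- real q) ^ d"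
proof -
  let ?p = "- real u / (real q + 1)"
  obtain k where d: "d = Suc k" using assms(2) by (cases d) auto
  have "(real d - real u - ?p + v) / - real q = nega_step q (real d) v - nega_step q (real u) ?p"
    unfolding nega_step_def diff_divide_distrib[symmetric] by (simp add: algebra_simps)
  then have "nega_step q (real d) v - ?p = (real d - real u - ?p + v) / - real q"
    unfolding nega_step_fixpoint[OF assms(1)] by simp
  then show ?thesis
    unfolding block_map_def funpow_nega_step[OF assms(1)] d by (simp add: mult.commute)
qed

lemma block_map_diff:
  assumes "q > 0" "1 \<le> d"
  shows "block_map q u d v - block_map q u d w = (v - w) / (- real q) ^ d"
  unfolding block_map_eq[OF assms] by (simp add: diff_divide_distrib[symmetric])

lemma mem_nega_interval_iff:
  "v \<in> nega_interval q \<longleftrightarrow> - real q \<le> v * (real q + 1) \<and> v * (real q + 1) \<le> 1"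
proof -
  have "real q + 1 > 0" by linarith
  then show ?thesis by (simp add: nega_interval_def field_simps)
qed

lemma closed_nega_interval: "closed (nega_interval q)"
  by (simp add: nega_interval_def)

lemma zero_mem_nega_interval: "0 \<in> nega_interval q"
  by (simp add: nega_interval_def)

lemma nega_interval_abs_diff_less_one:
  assumes "y \<in> interior (nega_interval q)" "w \<in> nega_interval q"
  shows "\<bar>y - w\<bar> < 1"
proof -
  have "1 / (real q + 1) - - real q / (real q + 1) = 1"
    by (simp add: field_simps add_pos_nonneg)
  moreover have "- real q / (real q + 1) < y" "y < 1 / (real q + 1)"
    "- real q / (real q + 1) \<le> w" "w \<le> 1 / (real q + 1)"
    using assms by (simp_all add: nega_interval_def)
  ultimately show ?thesis unfolding abs_less_iff by linarith
qed

lemma nega_step_diff: "nega_step q d v - nega_step q e w = (d - e + v - w) / - real q"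
  unfolding nega_step_def diff_divide_distrib[symmetric] by (simp add: algebra_simps)

lemma nega_step_greater_lower:
  assumes "q > 0" "d < real q - 1" "v \<le> 1 / (real q + 1)"
  shows "- real q / (real q + 1) < nega_step q d v"
proof -
  have q: "real q + 1 > 0" "real q > 0" using assms(1) by linarith+
  have "v * (real q + 1) \<le> 1"
    using assms(3) q by (simp add: field_simps)
  moreover have "d * (real q + 1) < (real q - 1) * (real q + 1)"
    using assms(2) q by (intro mult_strict_right_mono)
  ultimately have "(d + v) * (real q + 1) < real q * real q" by (simp add: algebra_simps)
  then show ?thesis using q by (simp add: nega_step_def field_simps)
qed

lemma nega_step_less_upper:
  assumes "q > 0" "0 < d" "- real q / (real q + 1) \<le> v"
  shows "nega_step q d v < 1 / (real q + 1)"
proof -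
  have q: "real q + 1 > 0" "real q > 0" using assms(1) by linarith+
  have "- real q \<le> v * (real q + 1)"
    using assms(3) q by (simp add: field_simps)
  moreover have "0 < d * (real q + 1)"
    using assms(2) q by simp
  ultimately have "- real q < (d + v) * (real q + 1)" by (simp add: algebra_simps)
  then show ?thesis using q by (simp add: nega_step_def field_simps)
qed

lemma nega_step_mem:
  assumes "q > 0" "0 \<le> d" "d \<le> real q - 1" "v \<in> nega_interval q"
  shows "nega_step q d v \<in> nega_interval q"
proof -
  have q: "real q + 1 > 0" "real q > 0" using assms(1) by linarith+
  have v: "- real q \<le> v * (real q + 1)" "v * (real q + 1) \<le> 1"
    using assms(4) by (simp_all add: mem_nega_interval_iff)
  have "0 \<le> d * (real q + 1)" "d * (real q + 1) \<le> (real q - 1) * (real q + 1)"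
    using assms(2,3) q by simp_all
  with v have "- real q \<le> (d + v) * (real q + 1)" "(d + v) * (real q + 1) \<le> real q * real q"
    by (simp_all add: algebra_simps)
  then show ?thesis using q by (simp add: nega_interval_def nega_step_def field_simps)
qed

lemma nega_step_interior:
  assumes "q > 0" "0 \<le> d" "d \<le> real q - 1" "v \<in> nega_interval q"
    and "0 < d \<or> - real q / (real q + 1) < v" "d < real q - 1 \<or> v < 1 / (real q + 1)"
  shows "nega_step q d v \<in> interior (nega_interval q)"
proof -
  have v: "- real q / (real q + 1) \<le> v" "v \<le> 1 / (real q + 1)"
    using assms(4) by (simp_all add: nega_interval_def)
  have "- real q / (real q + 1) < nega_step q d v"
  proof (cases "d < real q - 1")
    case False
    with assms(6) have "v < 1 / (real q + 1)" by simp
    have "real q + 1 > 0" using assms(1) by linarith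
    then have "real q - 1 + 1 / (real q + 1) = real q * (real q / (real q + 1))"
      by (simp add: field_simps)
    then have "- real q / (real q + 1) = nega_step q (real q - 1) (1 / (real q + 1))"
      using assms(1) by (simp add: nega_step_def)
    also have "\<dots> < nega_step q d v"
      using False assms(1,3) \<open>v < _\<close> by (simp add: nega_step_def divide_strict_right_mono)
    finally show ?thesis .
  qed (use assms(1) v in \<open>blast intro: nega_step_greater_lower\<close>)
  moreover have "nega_step q d v < 1 / (real q + 1)"
  proof (cases "0 < d")
    case False
    with assms(2,5) have "d = 0" "- real q / (real q + 1) < v" by simp_all
    then show ?thesis
      using assms(1) by (simp add: nega_step_def field_simps)
  qed (use assms(1) v in \<open>blast intro: nega_step_less_upper\<close>)
  ultimately show ?thesis by (simp add: nega_interval_def)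
qed

lemma funpow_nega_step_mem:
  assumes "q > 0" "u \<le> q - 1" "w \<in> nega_interval q"
  shows "(nega_step q (real u) ^^ k) w \<in> nega_interval q"
proof (induction k)
  case (Suc k)
  have "real u \<le> real q - 1" using assms(1,2) by linarith
  with Suc show ?case using assms(1) by (simp add: nega_step_mem)
qed (simp add: assms(3))

lemma block_map_mem:
  assumes "q > 0" "u \<le> q - 1" "d \<le> q - 1" "v \<in> nega_interval q"
  shows "block_map q u d v \<in> nega_interval q"
proof -
  have "real d \<le> real q - 1" using assms(1,3) by linarith
  then show ?thesis
    using assms by (simp add: block_map_def funpow_nega_step_mem nega_step_mem)
qed

text \<open>This is where q > 3 is needed: for q = 3 and u = 0 the repeated block 0 2 is the
  nega-ternary expansion of the endpoint 1/4.\<close>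

lemma block_map_interior:
  assumes "q > 3" "u \<le> q - 1" "1 \<le> d" "d \<le> q - 1" "v \<in> nega_interval q"
  shows "block_map q u d v \<in> interior (nega_interval q)"
proof (cases "d = 1")
  case True
  then show ?thesis
    using assms by (simp add: block_map_def nega_step_interior del: interior_atLeastAtMost_real)
next
  case False
  define k where "k = d - 2"
  have k: "d = Suc (Suc k)" using False assms(3) by (simp add: k_def)
  have q: "q > 0" using assms(1) by simp
  have u: "real u \<le> real q - 1" and d: "real d \<le> real q - 1" using assms by linarith+
  define w where "w = (nega_step q (real u) ^^ k) (nega_step q (real d) v)"
  have w: "w \<in> nega_interval q"
    unfolding w_def using assms d q by (simp add: nega_step_mem funpow_nega_step_mem)
  have "(0 < real u \<or> - real q / (real q + 1) < w) \<and> (real u < real q - 1 \<or> w < 1 / (real q + 1))"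
  proof (cases k)
    case 0
    then have "w \<in> interior (nega_interval q)"
      using assms q k by (simp add: w_def nega_step_interior del: interior_atLeastAtMost_real)
    then show ?thesis by (simp add: nega_interval_def)
  next
    case (Suc j)
    define w' where "w' = (nega_step q (real u) ^^ j) (nega_step q (real d) v)"
    have "w = nega_step q (real u) w'" by (simp add: w_def w'_def Suc)
    moreover have "w' \<in> nega_interval q"
      unfolding w'_def using assms d q by (simp add: nega_step_mem funpow_nega_step_mem)
    ultimately show ?thesis
      using q u nega_step_greater_lower[of q "real u" w'] nega_step_less_upper[of q "real u" w'] assms(1)
      by (force simp: nega_interval_def)
  qed
  moreover have "block_map q u d v = nega_step q (real u) w"
    by (simp add: block_map_def w_def k)
  ultimately show ?thesis
    using q u w by (simp add: nega_step_interior del: interior_atLeastAtMost_real)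
qed

section \<open>The coordinate map \<open>x\<close>\<close>

lemma abs_xval_term_le:
  assumes "q > 1" "u \<le> q - 1" "a \<in> adm_seqs q u"
  shows "\<bar>(real (a n) - real u) / (- real q) ^ (\<Sum>k\<le>n. a k)\<bar> \<le> (1 / real q) ^ n"
proof -
  have "a n \<le> q - 1" using assms(3) by (simp add: in_adm_seqs_iff)
  then have "\<bar>real (a n) - real u\<bar> \<le> real q" using assms(1,2) by linarith
  moreover have "real q ^ Suc n \<le> real q ^ (\<Sum>k\<le>n. a k)"
    using adm_seqs_digit_sum_ge[OF assms(3), of "Suc n"] assms(1)
    by (intro power_increasing) (simp_all add: lessThan_Suc_atMost)
  ultimately have "\<bar>real (a n) - real u\<bar> / real q ^ (\<Sum>k\<le>n. a k) \<le> real q / real q ^ Suc n"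
    using assms(1) by (intro frac_le) auto
  then show ?thesis
    using assms(1) by (simp add: power_abs power_divide)
qed

lemma summable_xval_terms:
  assumes "q > 1" "u \<le> q - 1" "a \<in> adm_seqs q u"
  shows "summable (\<lambda>n. (real (a n) - real u) / (- real q) ^ (\<Sum>k\<le>n. a k))"
  by (rule summable_comparison_test'[OF summable_geometric[of "1 / real q"]])
    (use assms abs_xval_term_le in auto)

lemma xval_eq_block_map:
  assumes "q > 1" "u \<le> q - 1" "a \<in> adm_seqs q u"
  shows "xval q u a = block_map q u (a 0) (xval q u (drop_seq 1 a))"
proof -
  let ?y = "\<lambda>a n. (real (a n) - real u) / (- real q) ^ (\<Sum>k\<le>n. a k)"
  have tail: "?y a (Suc n) = ?y (drop_seq 1 a) n / (- real q) ^ a 0" for n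
    by (simp only: sum.atMost_Suc_shift) (simp add: power_add mult.commute drop_seq_apply)
  have "suminf (?y a) = ?y a 0 + (\<Sum>n. ?y a (Suc n))"
    using suminf_split_head[OF summable_xval_terms[OF assms]] by simp
  also have "(\<Sum>n. ?y a (Suc n)) = (\<Sum>n. ?y (drop_seq 1 a) n / (- real q) ^ a 0)"
    by (simp only: tail)
  also have "\<dots> = suminf (?y (drop_seq 1 a)) / (- real q) ^ a 0"
    by (rule suminf_divide[OF summable_xval_terms[OF assms(1,2) adm_seqs_drop_seq[OF assms(3)]]])
  finally have "suminf (?y a) = (real (a 0) - real u + suminf (?y (drop_seq 1 a))) / (- real q) ^ a 0"
    by (simp add: add_divide_distrib)
  moreover have "1 \<le> a 0" using assms(3) by (simp add: in_adm_seqs_iff)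
  ultimately show ?thesis
    using assms(1) by (simp add: xval_def block_map_eq)
qed

lemma abs_xval_le:
  assumes "q > 1" "u \<le> q - 1" "a \<in> adm_seqs q u"
  shows "\<bar>xval q u a\<bar> \<le> 3"
proof -
  have "\<bar>\<Sum>n. (real (a n) - real u) / (- real q) ^ (\<Sum>k\<le>n. a k)\<bar> \<le> (\<Sum>n. (1 / real q) ^ n)"
    using norm_suminf_le[of "\<lambda>n. (real (a n) - real u) / (- real q) ^ (\<Sum>k\<le>n. a k)"]
      abs_xval_term_le[OF assms] assms(1) by simp
  also have "\<dots> = 1 / (1 - 1 / real q)"
    by (rule suminf_geometric) (use assms(1) in simp)
  also have "\<dots> = real q / (real q - 1)"
    using assms(1) by (simp add: field_simps)
  also have "\<dots> \<le> 2"
    using assms(1) by (simp add: field_simps)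
  finally have "\<bar>\<Sum>n. (real (a n) - real u) / (- real q) ^ (\<Sum>k\<le>n. a k)\<bar> \<le> 2" .
  moreover have "0 \<le> real u / (real q + 1)" "real u / (real q + 1) \<le> 1"
    using assms(1,2) by (simp_all add: field_simps)
  ultimately show ?thesis
    unfolding xval_def by linarith
qed

lemma infdist_block_map_le:
  assumes "q > 0" "u \<le> q - 1" "1 \<le> d" "d \<le> q - 1"
  shows "infdist (block_map q u d v) (nega_interval q) \<le> infdist v (nega_interval q) / real q"
proof -
  obtain c where c: "c \<in> nega_interval q" "infdist v (nega_interval q) = dist v c"
    using infdist_attains_inf[OF closed_nega_interval] zero_mem_nega_interval by blast
  have "infdist (block_map q u d v) (nega_interval q) \<le> dist (block_map q u d v) (block_map q u d c)"
    by (rule infdist_le) (use assms c(1) block_map_mem in blast)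
  also have "\<dots> = dist v c / real q ^ d"
    using block_map_diff[OF assms(1,3)] by (simp add: dist_real_def power_abs)
  also have "\<dots> \<le> dist v c / real q ^ 1"
    using assms(1,3) by (intro divide_left_mono power_increasing) auto
  finally show ?thesis using c(2) by simp
qed

lemma xval_mem_nega_interval:
  assumes "q > 1" "u \<le> q - 1" "a \<in> adm_seqs q u"
  shows "xval q u a \<in> nega_interval q"
proof -
  have bound: "infdist (xval q u a) (nega_interval q) \<le> 3 / real q ^ m"
    if "a \<in> adm_seqs q u" for a m
    using that
  proof (induction m arbitrary: a)
    case 0
    have "infdist (xval q u a) (nega_interval q) \<le> dist (xval q u a) 0"
      by (rule infdist_le[OF zero_mem_nega_interval])
    then show ?case using abs_xval_le[OF assms(1,2) 0] by simp
  next
    case (Suc m)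
    have "1 \<le> a 0" "a 0 \<le> q - 1" using Suc.prems by (simp_all add: in_adm_seqs_iff)
    then have "infdist (xval q u a) (nega_interval q)
        \<le> infdist (xval q u (drop_seq 1 a)) (nega_interval q) / real q"
      using assms(1,2) Suc.prems by (simp add: xval_eq_block_map infdist_block_map_le)
    also have "\<dots> \<le> 3 / real q ^ m / real q"
      using Suc.IH adm_seqs_drop_seq[OF Suc.prems] by (blast intro: divide_right_mono of_nat_0_le_iff)
    finally show ?case by (simp add: mult.commute)
  qed
  have "infdist (xval q u a) (nega_interval q) \<le> 0"
    by (rule LIMSEQ_le_const[OF LIMSEQ_divide_realpow_zero[of "real q" 3]])
      (use assms(1) bound[OF assms(3)] in auto)
  then show ?thesis
    using in_closed_iff_infdist_zero[OF closed_nega_interval] zero_mem_nega_interval infdist_nonneg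
    by (metis empty_iff order_antisym)
qed

lemma xval_mem_interior:
  assumes "q > 3" "u \<le> q - 1" "a \<in> adm_seqs q u"
  shows "xval q u a \<in> interior (nega_interval q)"
proof -
  have "1 \<le> a 0" "a 0 \<le> q - 1" using assms(3) by (simp_all add: in_adm_seqs_iff)
  moreover have "xval q u (drop_seq 1 a) \<in> nega_interval q"
    using assms by (simp add: xval_mem_nega_interval adm_seqs_drop_seq)
  ultimately show ?thesis
    using assms by (simp add: xval_eq_block_map block_map_interior del: interior_atLeastAtMost_real)
qed

lemma xval_neq_if_first_digit_less:
  assumes "q > 3" "u \<le> q - 1" "a \<in> adm_seqs q u" "b \<in> adm_seqs q u" "a 0 < b 0"
  shows "xval q u a \<noteq> xval q u b"
proof
  assume eq: "xval q u a = xval q u b"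
  have q: "q > 1" using assms(1) by simp
  have digits: "1 \<le> a 0" "a 0 \<noteq> u" "b 0 \<le> q - 1" using assms(3,4) by (simp_all add: in_adm_seqs_iff)
  define y where "y = xval q u (drop_seq 1 a)"
  define w where "w = (nega_step q (real u) ^^ (b 0 - a 0 - 1)) (nega_step q (real (b 0)) (xval q u (drop_seq 1 b)))"
  have y: "y \<in> interior (nega_interval q)"
    unfolding y_def using assms by (simp add: xval_mem_interior adm_seqs_drop_seq del: interior_atLeastAtMost_real)
  have w: "w \<in> nega_interval q"
    unfolding w_def using assms q digits
    by (simp add: funpow_nega_step_mem nega_step_mem xval_mem_nega_interval adm_seqs_drop_seq)
  have "xval q u a = (nega_step q (real u) ^^ (a 0 - 1)) (nega_step q (real (a 0)) y)"
    using assms q by (simp add: xval_eq_block_map block_map_def y_def)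
  moreover have "xval q u b = (nega_step q (real u) ^^ (a 0 - 1)) (nega_step q (real u) w)"
  proof -
    have split: "b 0 - 1 = (a 0 - 1) + Suc (b 0 - a 0 - 1)" using assms(5) digits by simp
    have "block_map q u (b 0) v = (nega_step q (real u) ^^ (a 0 - 1))
        (nega_step q (real u) ((nega_step q (real u) ^^ (b 0 - a 0 - 1)) (nega_step q (real (b 0)) v)))"
      for v unfolding block_map_def by (subst split) (simp only: funpow_add funpow.simps(2) comp_apply)
    then show ?thesis
      using assms q by (simp add: xval_eq_block_map w_def)
  qed
  ultimately have "nega_step q (real (a 0)) y = nega_step q (real u) w"
    using eq q by (metis funpow_nega_step_inj less_trans zero_less_one)
  then have "real (a 0) - real u = w - y" using q by (simp add: nega_step_def)
  moreover have "1 \<le> \<bar>real (a 0) - real u\<bar>" using digits(2) by linarith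
  ultimately show False using nega_interval_abs_diff_less_one[OF y w] by simp
qed

lemma xval_eq_imp_first_digit_and_tail:
  assumes "q > 3" "u \<le> q - 1" "a \<in> adm_seqs q u" "b \<in> adm_seqs q u" "xval q u a = xval q u b"
  shows "a 0 = b 0" "xval q u (drop_seq 1 a) = xval q u (drop_seq 1 b)"
proof -
  show "a 0 = b 0"
    using xval_neq_if_first_digit_less[OF assms(1-4)] xval_neq_if_first_digit_less[OF assms(1,2,4,3)]
      assms(5) by (metis linorder_neqE_nat)
  moreover have "1 \<le> a 0" using assms(3) by (simp add: in_adm_seqs_iff)
  ultimately show "xval q u (drop_seq 1 a) = xval q u (drop_seq 1 b)"
    using assms block_map_diff[of q "a 0" u "xval q u (drop_seq 1 a)" "xval q u (drop_seq 1 b)"]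
    by (simp add: xval_eq_block_map)
qed

lemma inj_on_xval:
  assumes "q > 3" "u \<le> q - 1"
  shows "inj_on (xval q u) (adm_seqs q u)"
proof (rule inj_onI, rule ext)
  fix a b n
  show "a \<in> adm_seqs q u \<Longrightarrow> b \<in> adm_seqs q u \<Longrightarrow> xval q u a = xval q u b \<Longrightarrow> a n = b n"
  proof (induction n arbitrary: a b)
    case 0
    then show ?case using xval_eq_imp_first_digit_and_tail[OF assms] by blast
  next
    case (Suc n)
    have "xval q u (drop_seq 1 a) = xval q u (drop_seq 1 b)"
      using xval_eq_imp_first_digit_and_tail(2)[OF assms Suc.prems] .
    then have "drop_seq 1 a n = drop_seq 1 b n"
      using Suc.IH adm_seqs_drop_seq Suc.prems(1,2) by blast
    then show ?case by (simp add: drop_seq_apply)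
  qed
qed

lemma summable_negaq_terms:
  assumes "q > 1" "a \<in> adm_seqs q u"
  shows "summable (\<lambda>n. real (a n) / (- real q) ^ Suc n)"
proof (rule summable_comparison_test'[OF summable_geometric[of "1 / real q"]])
  fix n
  have "a n \<le> q - 1" using assms(2) by (simp add: in_adm_seqs_iff)
  then have "a n \<le> q" by linarith
  then have "real (a n) / real q ^ Suc n \<le> real q / real q ^ Suc n"
    using assms(1) by (intro divide_right_mono) auto
  then show "norm (real (a n) / (- real q) ^ Suc n) \<le> (1 / real q) ^ n"
    using assms(1) by (simp add: abs_mult power_abs power_divide)
qed (use assms(1) in simp)

lemma negaq_eq_nega_step:
  assumes "q > 1" "a \<in> adm_seqs q u"
  shows "negaq q a = nega_step q (real (a 0)) (negaq q (drop_seq 1 a))"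
proof -
  have "negaq q a = real (a 0) / - real q + (\<Sum>n. real (a (Suc n)) / (- real q) ^ Suc (Suc n))"
    unfolding negaq_def using suminf_split_head[OF summable_negaq_terms[OF assms]] by simp
  also have "(\<Sum>n. real (a (Suc n)) / (- real q) ^ Suc (Suc n))
      = (\<Sum>n. real (drop_seq 1 a n) / (- real q) ^ Suc n / - real q)"
    by (simp add: mult.commute drop_seq_apply)
  also have "\<dots> = negaq q (drop_seq 1 a) / - real q"
    unfolding negaq_def
    by (rule suminf_divide[OF summable_negaq_terms[OF assms(1) adm_seqs_drop_seq[where m = 1, OF assms(2)]]])
  finally show ?thesis by (simp add: nega_step_def add_divide_distrib)
qed

lemma h_xval:
  assumes "q > 3" "u \<le> q - 1" "a \<in> adm_seqs q u"
  shows "h q u (xval q u a) = negaq q a"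
proof -
  let ?b = "SOME b. b \<in> adm_seqs q u \<and> xval q u b = xval q u a"
  have "?b \<in> adm_seqs q u \<and> xval q u ?b = xval q u a"
    by (rule someI[where x = a]) (use assms(3) in simp)
  then have "?b = a"
    using inj_on_xval[OF assms(1,2)] assms(3) by (blast dest: inj_onD)
  then show ?thesis by (simp add: h_def)
qed

lemma xval_diff_drop_seq:
  assumes "q > 1" "u \<le> q - 1" "a \<in> adm_seqs q u" "b \<in> adm_seqs q u" "\<forall>k<m. a k = b k"
  shows "xval q u b - xval q u a
    = (xval q u (drop_seq m b) - xval q u (drop_seq m a)) / (- real q) ^ (\<Sum>k<m. a k)"
  using assms(3-5)
proof (induction m arbitrary: a b)
  case (Suc m)
  have "1 \<le> a 0" using Suc.prems(1) by (simp add: in_adm_seqs_iff)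
  moreover have "a 0 = b 0" using Suc.prems(3) by simp
  ultimately have step: "xval q u b - xval q u a
      = (xval q u (drop_seq 1 b) - xval q u (drop_seq 1 a)) / (- real q) ^ a 0"
    using assms(1,2) Suc.prems(1,2) by (simp add: xval_eq_block_map block_map_diff)
  have "xval q u (drop_seq 1 b) - xval q u (drop_seq 1 a)
      = (xval q u (drop_seq m (drop_seq 1 b)) - xval q u (drop_seq m (drop_seq 1 a)))
        / (- real q) ^ (\<Sum>k<m. drop_seq 1 a k)"
    by (rule Suc.IH[OF adm_seqs_drop_seq[OF Suc.prems(1)] adm_seqs_drop_seq[OF Suc.prems(2)]])
      (use Suc.prems(3) in \<open>simp add: drop_seq_apply\<close>)
  moreover note step
  moreover have "(\<Sum>k<Suc m. a k) = a 0 + (\<Sum>k<m. drop_seq 1 a k)"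
    unfolding sum.lessThan_Suc_shift by (simp add: drop_seq_apply)
  ultimately show ?case
    by (simp add: power_add mult.commute)
qed simp

lemma negaq_diff_drop_seq:
  assumes "q > 1" "a \<in> adm_seqs q u" "b \<in> adm_seqs q u" "\<forall>k<m. a k = b k"
  shows "negaq q b - negaq q a = (negaq q (drop_seq m b) - negaq q (drop_seq m a)) / (- real q) ^ m"
  using assms(2-4)
proof (induction m arbitrary: a b)
  case (Suc m)
  have "negaq q b - negaq q a = (negaq q (drop_seq 1 b) - negaq q (drop_seq 1 a)) / - real q"
    unfolding negaq_eq_nega_step[OF assms(1) Suc.prems(1)] negaq_eq_nega_step[OF assms(1) Suc.prems(2)]
    using Suc.prems(3) by (simp add: nega_step_diff)
  also have "negaq q (drop_seq 1 b) - negaq q (drop_seq 1 a)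
      = (negaq q (drop_seq m (drop_seq 1 b)) - negaq q (drop_seq m (drop_seq 1 a))) / (- real q) ^ m"
    by (rule Suc.IH[OF adm_seqs_drop_seq[OF Suc.prems(1)] adm_seqs_drop_seq[OF Suc.prems(2)]])
      (use Suc.prems(3) in \<open>simp add: drop_seq_apply\<close>)
  finally show ?case
    by (simp add: mult.commute)
qed simp

section \<open>Difference quotients of \<open>h\<close>\<close>

definition diff_quotient :: "nat \<Rightarrow> nat \<Rightarrow> (nat \<Rightarrow> nat) \<Rightarrow> (nat \<Rightarrow> nat) \<Rightarrow> real" where
  "diff_quotient q u a b = (negaq q b - negaq q a) / (xval q u b - xval q u a)"

lemma diff_quotient_drop_seq:
  assumes "q > 1" "u \<le> q - 1" "a \<in> adm_seqs q u" "b \<in> adm_seqs q u" "\<forall>k<m. a k = b k"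
  shows "diff_quotient q u a b
    = (- real q) ^ ((\<Sum>k<m. a k) - m) * diff_quotient q u (drop_seq m a) (drop_seq m b)"
proof -
  define z where "z = - real q"
  define C where "C = (\<Sum>k<m. a k) - m"
  have S: "(\<Sum>k<m. a k) = m + C" using adm_seqs_digit_sum_ge[OF assms(3), of m] by (simp add: C_def)
  have z: "z \<noteq> 0" using assms(1) by (simp add: z_def)
  have "(A / z ^ m) / (D / z ^ (m + C)) = z ^ C * (A / D)" for A D :: real
    using z by (simp add: power_add)
  then have "diff_quotient q u a b = z ^ C * diff_quotient q u (drop_seq m a) (drop_seq m b)"
    unfolding diff_quotient_def xval_diff_drop_seq[OF assms] negaq_diff_drop_seq[OF assms(1,3-5)] S
    by (simp only: z_def)
  then show ?thesis by (simp only: z_def C_def)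
qed

lemma abs_xval_diff_le:
  assumes "q > 3" "u \<le> q - 1" "a \<in> adm_seqs q u" "b \<in> adm_seqs q u" "\<forall>k<m. a k = b k"
  shows "\<bar>xval q u b - xval q u a\<bar> \<le> 1 / real q ^ m"
proof -
  have q: "q > 1" using assms(1) by simp
  have "\<bar>xval q u (drop_seq m b) - xval q u (drop_seq m a)\<bar> < 1"
    using nega_interval_abs_diff_less_one[OF xval_mem_interior[OF assms(1,2) adm_seqs_drop_seq[OF assms(4)]]
        xval_mem_nega_interval[OF q assms(2) adm_seqs_drop_seq[OF assms(3)]]] .
  moreover have "real q ^ m \<le> real q ^ (\<Sum>k<m. a k)"
    using adm_seqs_digit_sum_ge[OF assms(3)] q by (intro power_increasing) auto
  ultimately have "\<bar>xval q u (drop_seq m b) - xval q u (drop_seq m a)\<bar> / real q ^ (\<Sum>k<m. a k)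
      \<le> 1 / real q ^ m"
    using q by (intro frac_le) auto
  then show ?thesis
    unfolding xval_diff_drop_seq[OF q assms(2-5)] by (simp add: power_abs)
qed

lemma tendsto_diff_quotient:
  assumes "q > 3" "u \<le> q - 1" "a \<in> adm_seqs q u"
    and lim: "((\<lambda>x. (h q u x - h q u (xval q u a)) / (x - xval q u a)) \<longlongrightarrow> L)
      (at (xval q u a) within Dh q u)"
    and b: "\<And>k. b k \<in> adm_seqs q u" "\<And>k. b k \<noteq> a" "\<And>k. \<forall>j<k. a j = b k j"
  shows "(\<lambda>k. diff_quotient q u a (b k)) \<longlonglongrightarrow> L"
proof -
  define X where "X k = xval q u (b k)" for k
  have X: "X k \<in> Dh q u - {xval q u a}" for k
    using b(1,2)[of k] assms(3) inj_on_xval[OF assms(1,2)]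
    by (auto simp: X_def Dh_def dest: inj_onD)
  have "(\<lambda>k. X k - xval q u a) \<longlonglongrightarrow> 0"
  proof (rule Lim_null_comparison)
    show "\<forall>\<^sub>F k in sequentially. norm (X k - xval q u a) \<le> 1 / real q ^ k"
      using abs_xval_diff_le[OF assms(1-3) b(1,3)] by (simp add: X_def)
    show "(\<lambda>k. 1 / real q ^ k) \<longlonglongrightarrow> 0"
      by (rule LIMSEQ_divide_realpow_zero) (use assms(1) in simp)
  qed
  then have "X \<longlonglongrightarrow> xval q u a"
    by (simp add: LIM_zero_iff)
  with lim X have "((\<lambda>x. (h q u x - h q u (xval q u a)) / (x - xval q u a)) \<circ> X) \<longlonglongrightarrow> L"
    by (simp add: tendsto_at_iff_sequentially)
  moreover have "((\<lambda>x. (h q u x - h q u (xval q u a)) / (x - xval q u a)) \<circ> X)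
      = (\<lambda>k. diff_quotient q u a (b k))"
    using assms(1-3) b(1) by (simp add: X_def h_xval diff_quotient_def comp_def)
  ultimately show ?thesis by simp
qed

lemma one_le_abs_diff_quotient_first_digit:
  assumes "q > 3" "u \<le> q - 1" "c \<in> adm_seqs q u" "c' \<in> adm_seqs q u"
    and "c' 0 \<noteq> c 0" "drop_seq 1 c' = drop_seq 1 c"
  shows "1 \<le> real q * \<bar>diff_quotient q u c c'\<bar>"
proof -
  have q: "q > 1" using assms(1) by simp
  have "negaq q c' - negaq q c = (real (c' 0) - real (c 0)) / - real q"
    unfolding negaq_eq_nega_step[OF q assms(4)] negaq_eq_nega_step[OF q assms(3)] assms(6)
    by (simp add: nega_step_diff)
  moreover have "1 \<le> \<bar>real (c' 0) - real (c 0)\<bar>" using assms(5) by linarith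
  ultimately have N: "1 \<le> real q * \<bar>negaq q c' - negaq q c\<bar>"
    using q by (simp add: abs_divide)
  have "\<bar>xval q u c' - xval q u c\<bar> < 1"
    by (rule nega_interval_abs_diff_less_one
        [OF xval_mem_interior[OF assms(1,2,4)] xval_mem_nega_interval[OF q assms(2,3)]])
  moreover have "xval q u c' \<noteq> xval q u c"
    using assms(5) inj_on_xval[OF assms(1,2)] assms(3,4) by (auto dest: inj_onD)
  ultimately have "\<bar>negaq q c' - negaq q c\<bar> \<le> \<bar>diff_quotient q u c c'\<bar>"
    by (simp add: diff_quotient_def abs_divide le_divide_eq mult_left_le)
  with N q show ?thesis
    by (meson mult_left_mono of_nat_0_le_iff order_trans)
qed

lemma power_digit_excess_le_diff_quotient:
  assumes "q > 3" "u \<le> q - 1" "a \<in> adm_seqs q u"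
    and "1 \<le> d" "d \<le> q - 1" "d \<noteq> u" "d \<noteq> a m"
  shows "real q ^ ((\<Sum>k<m. a k) - m) \<le> real q * \<bar>diff_quotient q u a (a(m := d))\<bar>"
proof -
  have q: "q > 1" using assms(1) by simp
  have b: "a(m := d) \<in> adm_seqs q u" using assms(3-6) by (rule adm_seqs_fun_upd)
  have "1 \<le> real q * \<bar>diff_quotient q u (drop_seq m a) (drop_seq m (a(m := d)))\<bar>"
    using assms(7) by (intro one_le_abs_diff_quotient_first_digit assms(1,2) adm_seqs_drop_seq assms(3) b)
      (auto simp: drop_seq_apply drop_seq_def)
  then have "real q ^ ((\<Sum>k<m. a k) - m)
      \<le> real q ^ ((\<Sum>k<m. a k) - m)
        * (real q * \<bar>diff_quotient q u (drop_seq m a) (drop_seq m (a(m := d)))\<bar>)"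
    by (simp add: mult_le_cancel_left1)
  also have "\<dots> = real q * \<bar>diff_quotient q u a (a(m := d))\<bar>"
    using diff_quotient_drop_seq[OF q assms(2,3) b, where m = m] by (simp add: abs_mult power_abs)
  finally show ?thesis .
qed

lemma digit_sum_excess_bounded:
  assumes "q > 3" "u \<le> q - 1" "a \<in> adm_seqs q u"
    and "((\<lambda>x. (h q u x - h q u (xval q u a)) / (x - xval q u a)) \<longlongrightarrow> L)
      (at (xval q u a) within Dh q u)"
  shows "\<exists>M. \<forall>m. (\<Sum>k<m. a k) \<le> m + M"
proof -
  have "\<exists>d. 1 \<le> d \<and> d \<le> q - 1 \<and> d \<noteq> u \<and> d \<noteq> a m" for m
    using exists_other_digit[OF assms(1), of u "a m"] by metis
  then obtain d where d: "\<And>m. 1 \<le> d m \<and> d m \<le> q - 1 \<and> d m \<noteq> u \<and> d m \<noteq> a m"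
    by metis
  define b where "b m = a(m := d m)" for m
  have "(\<lambda>m. diff_quotient q u a (b m)) \<longlonglongrightarrow> L"
  proof (rule tendsto_diff_quotient[OF assms])
    show "b m \<in> adm_seqs q u" for m
      unfolding b_def using d assms(3) by (simp add: adm_seqs_fun_upd)
    show "b m \<noteq> a" for m
      unfolding b_def using d by (metis fun_upd_same)
    show "\<forall>j<m. a j = b m j" for m
      unfolding b_def by simp
  qed
  then obtain K where K: "\<And>m. \<bar>diff_quotient q u a (b m)\<bar> \<le> K"
    using convergent_imp_Bseq[OF convergentI] BseqE by (metis real_norm_def)
  have "(\<Sum>k<m. a k) - m \<le> nat \<lceil>real q * K\<rceil>" for m
  proof -
    have "real ((\<Sum>k<m. a k) - m) < 2 ^ ((\<Sum>k<m. a k) - m)"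
      by (metis of_nat_less_two_power)
    also have "\<dots> \<le> real q ^ ((\<Sum>k<m. a k) - m)"
      using assms(1) by (intro power_mono) auto
    also have "\<dots> \<le> real q * K"
      using power_digit_excess_le_diff_quotient[OF assms(1-3)] d[of m] K[of m] assms(1)
      unfolding b_def by (meson mult_left_mono of_nat_0_le_iff order_trans)
    finally show ?thesis by linarith
  qed
  then show ?thesis by (metis add.commute le_diff_conv)
qed

lemma ones_with_prefix_diffs:
  fixes one :: "nat \<Rightarrow> nat"
  assumes "q > 1" "u \<le> q - 1" "u \<noteq> 1" "1 \<le> d" "d \<le> q - 1" "d \<noteq> u"
  defines "one \<equiv> \<lambda>_. 1"
  shows "xval q u (one(0 := d, 1 := d)) - xval q u one
      = (xval q u (one(0 := d)) - xval q u one) * (1 + 1 / (- real q) ^ d)"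
    and "negaq q (one(0 := d, 1 := d)) - negaq q one
      = (negaq q (one(0 := d)) - negaq q one) * (1 + 1 / - real q)"
proof -
  define one1 where "one1 = one(0 := d)"
  define one2 where "one2 = one1(1 := d)"
  have adm: "one1 \<in> adm_seqs q u" "one2 \<in> adm_seqs q u"
    using assms by (simp_all add: one_def one1_def one2_def in_adm_seqs_iff)
  have tails: "drop_seq 1 one1 = one" "drop_seq 1 one2 = one1"
    by (auto simp: one_def one1_def one2_def drop_seq_def)
  have x1: "xval q u one1 = block_map q u d (xval q u one)"
    using xval_eq_block_map[OF assms(1,2) adm(1)] tails(1) by (simp add: one1_def)
  have x2: "xval q u one2 = block_map q u d (xval q u one1)"
    using xval_eq_block_map[OF assms(1,2) adm(2)] tails(2) by (simp add: one2_def one1_def)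
  have "xval q u one2 - xval q u one1 = (xval q u one1 - xval q u one) / (- real q) ^ d"
    using block_map_diff[of q d u "xval q u one1" "xval q u one"] assms(1,4)
    by (simp add: x2 x1[symmetric])
  then show "xval q u one2 - xval q u one = (xval q u one1 - xval q u one) * (1 + 1 / (- real q) ^ d)"
    by (simp only: distrib_left mult_1_right times_divide_eq_right)
  have n1: "negaq q one1 = nega_step q (real d) (negaq q one)"
    using negaq_eq_nega_step[OF assms(1) adm(1)] tails(1) by (simp add: one1_def)
  have n2: "negaq q one2 = nega_step q (real d) (negaq q one1)"
    using negaq_eq_nega_step[OF assms(1) adm(2)] tails(2) by (simp add: one2_def one1_def)
  have "negaq q one2 - negaq q one1 = (negaq q one1 - negaq q one) / - real q"
    using nega_step_diff[of q "real d" "negaq q one1" "real d" "negaq q one"]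
    by (simp add: n2 n1[symmetric])
  then show "negaq q one2 - negaq q one = (negaq q one1 - negaq q one) * (1 + 1 / - real q)"
    by (simp only: distrib_left mult_1_right times_divide_eq_right)
qed

lemma diff_quotient_ones_neq:
  assumes "q > 3" "u \<le> q - 1" "u \<noteq> 1" "2 \<le> d" "d \<le> q - 1" "d \<noteq> u"
  shows "diff_quotient q u (\<lambda>_. 1) ((\<lambda>_. 1)(0 := d))
    \<noteq> diff_quotient q u (\<lambda>_. 1) ((\<lambda>_. 1)(0 := d, 1 := d))"
proof
  define one :: "nat \<Rightarrow> nat" where "one = (\<lambda>_. 1)"
  define D where "D = xval q u (one(0 := d)) - xval q u one"
  define N where "N = negaq q (one(0 := d)) - negaq q one"
  define z where "z = - real q"
  define w where "w = z ^ d"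
  have q: "q > 1" using assms(1) by simp
  have adm: "one \<in> adm_seqs q u" "one(0 := d) \<in> adm_seqs q u"
    using assms by (simp_all add: one_def in_adm_seqs_iff)
  have "one(0 := d) \<noteq> one" using assms(4) by (auto simp: one_def fun_eq_iff)
  then have "D \<noteq> 0"
    using inj_on_xval[OF assms(1,2)] adm by (auto simp: D_def dest: inj_onD)
  have "N = (real d - 1) / z"
    unfolding N_def negaq_eq_nega_step[OF q adm(2)]
    by (subst negaq_eq_nega_step[OF q adm(1)]) (simp add: nega_step_diff one_def z_def drop_seq_def)
  then have "N \<noteq> 0" using assms(4) q by (simp add: z_def)
  assume "diff_quotient q u (\<lambda>_. 1) ((\<lambda>_. 1)(0 := d))
    = diff_quotient q u (\<lambda>_. 1) ((\<lambda>_. 1)(0 := d, 1 := d))"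
  then have quot: "N / D = (N * (1 + 1 / z)) / (D * (1 + 1 / w))"
    using ones_with_prefix_diffs[OF q assms(2,3) _ assms(5,6)] assms(4)
    by (simp add: diff_quotient_def one_def D_def N_def z_def w_def)
  with \<open>D \<noteq> 0\<close> \<open>N \<noteq> 0\<close> have "D * (1 + 1 / w) \<noteq> 0" by auto
  with \<open>D \<noteq> 0\<close> quot have "N * (D * (1 + 1 / w)) = N * (1 + 1 / z) * D" by (simp add: frac_eq_eq)
  with \<open>D \<noteq> 0\<close> \<open>N \<noteq> 0\<close> have "w = z" by (simp add: algebra_simps)
  then have "\<bar>w\<bar> = \<bar>z\<bar>" by simp
  then have "q ^ d = q ^ 1"
    by (simp add: w_def z_def power_abs flip: of_nat_power)
  moreover have "q ^ 1 < q ^ d"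
    using q assms(4) by (intro power_strict_increasing) auto
  ultimately show False by simp
qed

lemma limit_eq_diff_quotient_of_tail:
  assumes "q > 3" "u \<le> q - 1" "a \<in> adm_seqs q u"
    and "((\<lambda>x. (h q u x - h q u (xval q u a)) / (x - xval q u a)) \<longlongrightarrow> L)
      (at (xval q u a) within Dh q u)"
    and ones: "\<And>m. n0 \<le> m \<Longrightarrow> a m = 1"
    and b: "\<And>k. b k \<in> adm_seqs q u" "\<And>k. b k \<noteq> a" "\<And>k. \<forall>j<n0 + k. a j = b k j"
    and t: "\<And>k. drop_seq (n0 + k) (b k) = t"
  shows "L = (- real q) ^ ((\<Sum>k<n0. a k) - n0) * diff_quotient q u (\<lambda>_. 1) t"
proof -
  have q: "q > 1" using assms(1) by simp
  have excess: "(\<Sum>k<m. a k) - m = (\<Sum>k<n0. a k) - n0" if "n0 \<le> m" for m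
    using that
  proof (induction m rule: dec_induct)
    case (step m)
    then show ?case using ones[of m] adm_seqs_digit_sum_ge[OF assms(3), of m] by simp
  qed simp
  have tail: "drop_seq m a = (\<lambda>_. 1)" if "n0 \<le> m" for m
    using ones that by (auto simp: drop_seq_def)
  have "(\<lambda>k. diff_quotient q u a (b k)) \<longlonglongrightarrow> L"
    by (rule tendsto_diff_quotient[OF assms(1-4) b(1,2)]) (use b(3) in auto)
  moreover have "diff_quotient q u a (b k)
      = (- real q) ^ ((\<Sum>k<n0. a k) - n0) * diff_quotient q u (\<lambda>_. 1) t" for k
    using diff_quotient_drop_seq[OF q assms(2,3) b(1) b(3)] excess[of "n0 + k"] tail[of "n0 + k"] t[of k]
    by simp
  ultimately show ?thesis by (simp add: LIMSEQ_const_iff)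
qed

lemma digit_sum_excess_unbounded:
  assumes "q > 3" "u \<le> q - 1" "a \<in> adm_seqs q u"
    and "((\<lambda>x. (h q u x - h q u (xval q u a)) / (x - xval q u a)) \<longlongrightarrow> L)
      (at (xval q u a) within Dh q u)"
  shows "\<not> (\<forall>m. (\<Sum>k<m. a k) \<le> m + M)"
proof
  assume "\<forall>m. (\<Sum>k<m. a k) \<le> m + M"
  then obtain n0 where ones: "\<And>m. n0 \<le> m \<Longrightarrow> a m = 1"
    using eventually_digits_one[OF assms(3)] by blast
  have "u \<noteq> 1" using assms(3) ones[of n0] by (auto simp: in_adm_seqs_iff)
  obtain d where d: "1 \<le> d" "d \<le> q - 1" "d \<noteq> u" "d \<noteq> 1"
    using exists_other_digit[OF assms(1)] by metis
  note limit = limit_eq_diff_quotient_of_tail[OF assms ones]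
  have "L = (- real q) ^ ((\<Sum>k<n0. a k) - n0) * diff_quotient q u (\<lambda>_. 1) ((\<lambda>_. 1)(0 := d))"
  proof (rule limit)
    show "a(n0 + k := d) \<in> adm_seqs q u" for k using assms(3) d by (simp add: adm_seqs_fun_upd)
    show "a(n0 + k := d) \<noteq> a" for k using ones[of "n0 + k"] d(4) by (metis fun_upd_same le_add1)
    show "\<forall>j<n0 + k. a j = (a(n0 + k := d)) j" for k by simp
    show "drop_seq (n0 + k) (a(n0 + k := d)) = (\<lambda>_. 1)(0 := d)" for k
      using ones by (auto simp: drop_seq_def)
  qed
  moreover have "L = (- real q) ^ ((\<Sum>k<n0. a k) - n0)
      * diff_quotient q u (\<lambda>_. 1) ((\<lambda>_. 1)(0 := d, 1 := d))"
  proof (rule limit)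
    show "a(n0 + k := d, Suc (n0 + k) := d) \<in> adm_seqs q u" for k
      using assms(3) d by (simp add: adm_seqs_fun_upd)
    show "a(n0 + k := d, Suc (n0 + k) := d) \<noteq> a" for k
      using ones[of "n0 + k"] d(4) by (metis fun_upd_apply le_add1 n_not_Suc_n)
    show "\<forall>j<n0 + k. a j = (a(n0 + k := d, Suc (n0 + k) := d)) j" for k by simp
    show "drop_seq (n0 + k) (a(n0 + k := d, Suc (n0 + k) := d)) = (\<lambda>_. 1)(0 := d, 1 := d)" for k
      using ones by (auto simp: drop_seq_def)
  qed
  ultimately show False
    using diff_quotient_ones_neq[OF assms(1,2) \<open>u \<noteq> 1\<close> _ d(2,3)] d(1,4) assms(1) by simp
qed

theorem theorem3p1:
  fixes q u :: nat and x0 :: real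
  assumes "q > 3" and "u \<le> q - 1" and "x0 \<in> Dh q u"
  shows "\<not> (\<exists>L::real. ((\<lambda>x. (h q u x - h q u x0) / (x - x0)) \<longlongrightarrow> L)
                         (at x0 within Dh q u))"
proof
  assume "\<exists>L::real. ((\<lambda>x. (h q u x - h q u x0) / (x - x0)) \<longlongrightarrow> L) (at x0 within Dh q u)"
  then obtain L
    where lim: "((\<lambda>x. (h q u x - h q u x0) / (x - x0)) \<longlongrightarrow> L) (at x0 within Dh q u)"
    by blast
  from assms(3) obtain a where a: "a \<in> adm_seqs q u" and x0: "x0 = xval q u a"
    by (auto simp: Dh_def)
  obtain M where "\<forall>m. (\<Sum>k<m. a k) \<le> m + M"
    using digit_sum_excess_bounded[OF assms(1,2) a lim[unfolded x0]] by blast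
  with digit_sum_excess_unbounded[OF assms(1,2) a lim[unfolded x0]] show False
    by blast
qed

end
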